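(* Let $f(X)=N(N-1)\sum_{i=1}^{\ell}\beta_i\,t(H_i,X)$ be a subgraph-counting function and let $m_i=|E(H_i)|$. Then for all $X,Y\in[0,1]^n$, $$\|\nabla f(X)-\nabla f(Y)\|_1\le\sum_{i=1}^{\ell}|\beta_i|\,m_i(m_i-1)\,\|X-Y\|_1.$$
   Context: $n=\binom N2$; $X\in[0,1]^n$ is identified with a symmetric $N\times N$ matrix with zero diagonal, entries indexed by unordered pairs. For a finite simple graph $H$ on $[m]$, $t(H,X)=\frac{1}{N(N-1)\cdots(N-m+1)}\sum_q\prod_{\{l,l'\}\in E(H)}X_{q_lq_{l'}}$ over injective $q:[m]\to[N]$. For an index $e$, $\partial_ef(X)=\frac12(f(X^{e\leftarrow1})-f(X^{e\leftarrow0}))$, $\nabla f(X)=(\partial_ef(X))_e\in\mathbb R^n$. $\|\cdot\|_1$ is the $\ell^1$ norm on $\mathbb R^n$. *)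

theory Defs
  imports "HOL-Analysis.Analysis"
begin

text \<open>Index set of unordered pairs of distinct vertices in [N] = {0..<N}; it has N choose 2 elements.
  A point X of [0,1]^n is a function on these pairs (values elsewhere are irrelevant).\<close>
definition pairs :: "nat \<Rightarrow> nat set set" where
  "pairs N = {{i, j} | i j. i < N \<and> j < N \<and> i \<noteq> j}"

text \<open>A finite simple graph H on [m] = {0..<m} is given by m and an edge set E \<subseteq> pairs m.\<close>
definition hom_density :: "nat \<Rightarrow> nat set set \<Rightarrow> nat \<Rightarrow> (nat set \<Rightarrow> real) \<Rightarrow> real" where
  "hom_density m E N X =
     (\<Sum>q\<in>{q. q \<in> {0..<m} \<rightarrow>\<^sub>E {0..<N} \<and> inj_on q {0..<m}}. \<Prod>e\<in>E. X (q ` e))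
       / (\<Prod>k<m. real (N - k))"

definition dpartial :: "((nat set \<Rightarrow> real) \<Rightarrow> real) \<Rightarrow> nat set \<Rightarrow> (nat set \<Rightarrow> real) \<Rightarrow> real" where
  "dpartial f e X = (f (X(e := 1)) - f (X(e := 0))) / 2"

definition l1norm :: "nat \<Rightarrow> (nat set \<Rightarrow> real) \<Rightarrow> real" where
  "l1norm N v = (\<Sum>e\<in>pairs N. \<bar>v e\<bar>)"

end

theory Submission
  imports Defs
begin

text \<open>Flipping the
  coordinate \<open>e\<close> only affects the injections that map some edge \<open>a\<close> of \<open>H\<close> onto \<open>e\<close>, so
  \<open>\<partial>\<^sub>e t(H, X)\<close> is an average of products of \<open>X\<close> over the images of the other edges, and
  for entries in \<open>[0,1]\<close> two such products differ by at most the sum of the coordinate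
  differences. Summing over \<open>e\<close> and \<open>q\<close>, each ordered pair \<open>(a, b)\<close> of distinct edges
  contributes the average of \<open>|X - Y|\<close> over the images \<open>q b\<close>; since every pair of \<open>[N]\<close> is the
  image of \<open>b\<close> under equally many injections, this average is \<open>\<parallel>X - Y\<parallel>\<^sub>1 / (N(N-1))\<close>.\<close>

definition inj_maps :: "nat \<Rightarrow> nat \<Rightarrow> (nat \<Rightarrow> nat) set" where
  "inj_maps m N = {q \<in> {0..<m} \<rightarrow>\<^sub>E {0..<N}. inj_on q {0..<m}}"

lemma pairs_subset_Pow: "pairs m \<subseteq> Pow {0..<m}"
  by (auto simp: pairs_def)

lemma finite_pairs: "finite (pairs N)"
  using pairs_subset_Pow by (rule finite_subset) simp

lemma finite_inj_maps: "finite (inj_maps m N)"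
  unfolding inj_maps_def by (auto intro: finite_subset[OF _ finite_PiE[of "{0..<m}"]])

lemma image_in_pairs:
  assumes "q \<in> inj_maps m N" "b \<in> pairs m"
  shows "q ` b \<in> pairs N"
proof -
  obtain x y where b: "b = {x, y}" "x < m" "y < m" "x \<noteq> y"
    using assms(2) by (auto simp: pairs_def)
  have "inj_on q {0..<m}" "q \<in> {0..<m} \<rightarrow> {0..<N}"
    using assms(1) by (auto simp: inj_maps_def)
  then have "q x \<noteq> q y" "q x < N" "q y < N"
    using b by (auto simp: inj_on_eq_iff)
  then show ?thesis using b by (auto simp: pairs_def)
qed

lemma inj_on_fun_upd_two_points:
  assumes "x \<in> A" "y \<in> A" "x \<noteq> y" "i \<noteq> j"
    and "h \<in> (A - {x, y}) \<rightarrow> (C - {i, j})" "inj_on h (A - {x, y})"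
  shows "inj_on (h(x := i, y := j)) A"
proof -
  let ?B = "A - {x, y}"
  have "inj_on (h(x := i, y := j)) ?B"
    using assms(6) by (rule inj_on_cong[THEN iffD1, rotated]) auto
  moreover have "(h(x := i, y := j)) ` ?B = h ` ?B" by auto
  moreover have "i \<notin> h ` ?B" "j \<notin> h ` ?B" using assms(5) by auto
  ultimately have "inj_on (h(x := i, y := j)) (insert x (insert y ?B))"
    using assms by (simp add: inj_on_insert insert_Diff_if) blast
  also have "insert x (insert y ?B) = A" using assms by blast
  finally show ?thesis .
qed

lemma inj_PiE_fixing_two_points_eq:
  assumes "x \<in> A" "y \<in> A" "x \<noteq> y" "i \<in> C" "j \<in> C" "i \<noteq> j"
  shows "{g \<in> A \<rightarrow>\<^sub>E C. inj_on g A \<and> g x = i \<and> g y = j}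
       = (\<lambda>h. h(x := i, y := j)) ` {h \<in> (A - {x, y}) \<rightarrow>\<^sub>E (C - {i, j}). inj_on h (A - {x, y})}"
proof (intro equalityI subsetI)
  fix g assume g: "g \<in> {g \<in> A \<rightarrow>\<^sub>E C. inj_on g A \<and> g x = i \<and> g y = j}"
  have "restrict g (A - {x, y}) \<in> (A - {x, y}) \<rightarrow>\<^sub>E (C - {i, j})"
    using g assms by (auto simp: inj_on_def)
  moreover have "(restrict g (A - {x, y}))(x := i, y := j) = g"
    using g by (auto simp: fun_eq_iff PiE_def extensional_def)
  ultimately show "g \<in> (\<lambda>h. h(x := i, y := j)) ` {h \<in> (A - {x, y}) \<rightarrow>\<^sub>E (C - {i, j}). inj_on h (A - {x, y})}"
    using g by (intro image_eqI[where x = "restrict g (A - {x, y})"]) (auto intro: inj_on_subset)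
next
  fix g assume "g \<in> (\<lambda>h. h(x := i, y := j)) ` {h \<in> (A - {x, y}) \<rightarrow>\<^sub>E (C - {i, j}). inj_on h (A - {x, y})}"
  then obtain h where h: "h \<in> (A - {x, y}) \<rightarrow>\<^sub>E (C - {i, j})" "inj_on h (A - {x, y})"
    and g: "g = h(x := i, y := j)"
    by blast
  have "inj_on g A"
    unfolding g using assms h by (intro inj_on_fun_upd_two_points) auto
  then show "g \<in> {g \<in> A \<rightarrow>\<^sub>E C. inj_on g A \<and> g x = i \<and> g y = j}"
    using h assms unfolding g by (auto simp: PiE_def extensional_def)
qed

lemma card_inj_PiE_fixing_two_points:
  assumes "finite A" "finite C" "x \<in> A" "y \<in> A" "x \<noteq> y" "i \<in> C" "j \<in> C" "i \<noteq> j"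
  shows "card {g \<in> A \<rightarrow>\<^sub>E C. inj_on g A \<and> g x = i \<and> g y = j}
       = prod ((-) (card C - 2)) {0..<card A - 2}"
proof -
  let ?S = "{h \<in> (A - {x, y}) \<rightarrow>\<^sub>E (C - {i, j}). inj_on h (A - {x, y})}"
  have "inj_on (\<lambda>h. h(x := i, y := j)) ?S"
  proof (rule inj_onI, rule ext)
    fix h h' z assume h: "h \<in> ?S" "h' \<in> ?S" and eq: "h(x := i, y := j) = h'(x := i, y := j)"
    show "h z = h' z"
    proof (cases "z \<in> {x, y}")
      case True
      then show ?thesis using h by (auto simp: PiE_def extensional_def)
    next
      case False
      then show ?thesis using fun_cong[OF eq, of z] by simp
    qed
  qed
  then have "card {g \<in> A \<rightarrow>\<^sub>E C. inj_on g A \<and> g x = i \<and> g y = j} = card ?S"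
    unfolding inj_PiE_fixing_two_points_eq[OF assms(3-)] by (rule card_image)
  also have "\<dots> = prod ((-) (card C - 2)) {0..<card A - 2}"
  proof -
    have "card (A - {x, y}) = card A - 2" "card (C - {i, j}) = card C - 2"
      using assms by (simp_all add: card_Diff_subset)
    then show ?thesis
      using card_inj_on_subset_funcset[of "A - {x, y}" "C - {i, j}" "A - {x, y}"] assms by simp
  qed
  finally show ?thesis .
qed

lemma card_inj_maps_pair_image:
  assumes b: "b \<in> pairs m" and e: "e \<in> pairs N"
  shows "card {q \<in> inj_maps m N. q ` b = e} = 2 * prod ((-) (N - 2)) {0..<m - 2}"
proof -
  obtain x y where xy: "b = {x, y}" "x < m" "y < m" "x \<noteq> y"
    using b by (auto simp: pairs_def)
  obtain i j where ij: "e = {i, j}" "i < N" "j < N" "i \<noteq> j"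
    using e by (auto simp: pairs_def)
  let ?fix = "\<lambda>i j. {q \<in> inj_maps m N. q x = i \<and> q y = j}"
  have card_fix: "card (?fix i' j') = prod ((-) (N - 2)) {0..<m - 2}"
    if "i' < N" "j' < N" "i' \<noteq> j'" for i' j'
    using card_inj_PiE_fixing_two_points[of "{0..<m}" "{0..<N}" x y i' j'] xy that
    by (simp add: inj_maps_def conj_assoc)
  have "{q \<in> inj_maps m N. q ` b = e} = ?fix i j \<union> ?fix j i"
    using xy ij by (auto simp: doubleton_eq_iff)
  then have "card {q \<in> inj_maps m N. q ` b = e} = card (?fix i j) + card (?fix j i)"
    using ij finite_inj_maps by (simp add: card_Un_disjoint disjoint_iff)
  then show ?thesis
    using ij card_fix by simp
qed

lemma prod_lessThan_diff_split:
  fixes m N :: nat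
  assumes "2 \<le> m"
  shows "(\<Prod>k<m. N - k) = N * (N - 1) * prod ((-) (N - 2)) {0..<m - 2}"
proof -
  obtain m' where m: "m = Suc (Suc m')" using assms by (metis add_2_eq_Suc le_Suc_ex)
  have "(\<Prod>k<m. N - k) = N * ((N - 1) * (\<Prod>k<m'. N - Suc (Suc k)))"
    unfolding m by (simp only: prod.lessThan_Suc_shift) simp
  also have "(\<Prod>k<m'. N - Suc (Suc k)) = prod ((-) (N - 2)) {0..<m - 2}"
    unfolding m lessThan_atLeast0 by (intro prod.cong) auto
  finally show ?thesis by (simp only: mult.assoc)
qed

lemma sum_inj_maps_pair_image:
  fixes h :: "nat set \<Rightarrow> real"
  assumes b: "b \<in> pairs m"
  shows "real N * (real N - 1) * (\<Sum>q\<in>inj_maps m N. h (q ` b))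
       = 2 * (\<Prod>k<m. real (N - k)) * (\<Sum>e\<in>pairs N. h e)"
proof -
  define K where "K = prod ((-) (N - 2)) {0..<m - 2}"
  have "(\<Sum>q\<in>inj_maps m N. h (q ` b)) = (\<Sum>e\<in>pairs N. \<Sum>q\<in>{q \<in> inj_maps m N. q ` b = e}. h (q ` b))"
    by (rule sum.group[symmetric]) (use finite_inj_maps finite_pairs image_in_pairs b in auto)
  also have "\<dots> = (\<Sum>e\<in>pairs N. real (card {q \<in> inj_maps m N. q ` b = e}) * h e)"
    by (intro sum.cong refl) simp
  also have "\<dots> = 2 * real K * (\<Sum>e\<in>pairs N. h e)"
    by (simp add: card_inj_maps_pair_image[OF b] K_def sum_distrib_left)
  finally have "(\<Sum>q\<in>inj_maps m N. h (q ` b)) = 2 * real K * (\<Sum>e\<in>pairs N. h e)" .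
  moreover have "(\<Prod>k<m. real (N - k)) = real N * (real N - 1) * real K"
  proof -
    have "2 \<le> m" using b by (auto simp: pairs_def)
    then have "(\<Prod>k<m. real (N - k)) = real N * real (N - 1) * real K"
      unfolding K_def by (simp flip: of_nat_prod add: prod_lessThan_diff_split)
    then show ?thesis by (cases N) auto
  qed
  ultimately show ?thesis by simp
qed

lemma prod_fun_upd_one_minus_zero:
  fixes Z :: "'b \<Rightarrow> 'c::comm_ring_1"
  assumes "finite E" "inj_on \<phi> E"
  shows "(\<Prod>a\<in>E. (Z(e := 1)) (\<phi> a)) - (\<Prod>a\<in>E. (Z(e := 0)) (\<phi> a))
       = (\<Sum>a\<in>{a \<in> E. \<phi> a = e}. \<Prod>b\<in>E - {a}. Z (\<phi> b))"
proof (cases "e \<in> \<phi> ` E")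
  case True
  then obtain a where a: "a \<in> E" "\<phi> a = e" by blast
  then have fiber: "{a \<in> E. \<phi> a = e} = {a}"
    using assms(2) by (auto dest: inj_onD)
  have "(\<Prod>b\<in>E. (Z(e := c)) (\<phi> b)) = c * (\<Prod>b\<in>E - {a}. Z (\<phi> b))" for c
  proof -
    have "(\<Prod>b\<in>E. (Z(e := c)) (\<phi> b)) = (Z(e := c)) (\<phi> a) * (\<Prod>b\<in>E - {a}. (Z(e := c)) (\<phi> b))"
      by (rule prod.remove[OF assms(1) a(1)])
    also have "(\<Prod>b\<in>E - {a}. (Z(e := c)) (\<phi> b)) = (\<Prod>b\<in>E - {a}. Z (\<phi> b))"
      using fiber by (intro prod.cong) auto
    finally show ?thesis
      using a(2) by simp
  qed
  then show ?thesis
    unfolding fiber by simp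
next
  case False
  then have fiber: "{a \<in> E. \<phi> a = e} = {}" by auto
  have "(\<Prod>a\<in>E. (Z(e := c)) (\<phi> a)) = (\<Prod>a\<in>E. Z (\<phi> a))" for c
    using False by (intro prod.cong) auto
  then show ?thesis
    unfolding fiber by simp
qed

lemma hom_density_eq:
  "hom_density m E N Z = (\<Sum>q\<in>inj_maps m N. \<Prod>b\<in>E. Z (q ` b)) / (\<Prod>k<m. real (N - k))"
  by (simp add: hom_density_def inj_maps_def)

lemma dpartial_hom_density:
  assumes "E \<subseteq> pairs m"
  shows "dpartial (hom_density m E N) e Z
       = (\<Sum>q\<in>inj_maps m N. \<Sum>a\<in>{a \<in> E. q ` a = e}. \<Prod>b\<in>E - {a}. Z (q ` b))
           / (2 * (\<Prod>k<m. real (N - k)))"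
proof -
  have "finite E"
    using assms finite_pairs by (rule finite_subset)
  have "dpartial (hom_density m E N) e Z
      = ((\<Sum>q\<in>inj_maps m N. \<Prod>b\<in>E. (Z(e := 1)) (q ` b)) - (\<Sum>q\<in>inj_maps m N. \<Prod>b\<in>E. (Z(e := 0)) (q ` b)))
          / (2 * (\<Prod>k<m. real (N - k)))"
    unfolding dpartial_def hom_density_eq by (simp add: diff_divide_distrib)
  also have "(\<Sum>q\<in>inj_maps m N. \<Prod>b\<in>E. (Z(e := 1)) (q ` b)) - (\<Sum>q\<in>inj_maps m N. \<Prod>b\<in>E. (Z(e := 0)) (q ` b))
      = (\<Sum>q\<in>inj_maps m N. \<Sum>a\<in>{a \<in> E. q ` a = e}. \<Prod>b\<in>E - {a}. Z (q ` b))"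
    unfolding sum_subtractf[symmetric]
  proof (intro sum.cong refl prod_fun_upd_one_minus_zero \<open>finite E\<close>)
    fix q assume "q \<in> inj_maps m N"
    then show "inj_on (image q) E"
      using inj_on_subset[OF inj_on_image_Pow[of q "{0..<m}"], of E] assms pairs_subset_Pow[of m]
      by (auto simp: inj_maps_def)
  qed
  finally show ?thesis .
qed

lemma l1norm_dpartial_hom_density_diff_le:
  fixes X Y :: "nat set \<Rightarrow> real"
  assumes E: "E \<subseteq> pairs m"
    and X01: "\<forall>e\<in>pairs N. 0 \<le> X e \<and> X e \<le> 1"
    and Y01: "\<forall>e\<in>pairs N. 0 \<le> Y e \<and> Y e \<le> 1"
  shows "l1norm N (\<lambda>e. dpartial (hom_density m E N) e X - dpartial (hom_density m E N) e Y)
       \<le> (\<Sum>a\<in>E. \<Sum>b\<in>E - {a}. \<Sum>q\<in>inj_maps m N. \<bar>X (q ` b) - Y (q ` b)\<bar>) / (2 * (\<Prod>k<m. real (N - k)))"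
proof -
  define P where "P = 2 * (\<Prod>k<m. real (N - k))"
  define T where "T = (\<lambda>q a (Z :: nat set \<Rightarrow> real). \<Prod>b\<in>E - {a}. Z (q ` b))"
  have "finite E"
    using E finite_pairs by (rule finite_subset)
  have "0 \<le> P"
    by (simp add: P_def prod_nonneg)
  have "l1norm N (\<lambda>e. dpartial (hom_density m E N) e X - dpartial (hom_density m E N) e Y)
      = (\<Sum>e\<in>pairs N. \<bar>\<Sum>q\<in>inj_maps m N. \<Sum>a\<in>{a \<in> E. q ` a = e}. T q a X - T q a Y\<bar>) / P"
    unfolding l1norm_def dpartial_hom_density[OF E] diff_divide_distrib[symmetric] sum_subtractf
    using \<open>0 \<le> P\<close> by (simp add: P_def T_def abs_divide sum_divide_distrib)
  also have "\<dots> \<le> (\<Sum>e\<in>pairs N. \<Sum>q\<in>inj_maps m N. \<Sum>a\<in>{a \<in> E. q ` a = e}. \<bar>T q a X - T q a Y\<bar>) / P"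
    using \<open>0 \<le> P\<close> by (intro divide_right_mono sum_mono order_trans[OF sum_abs]) auto
  also have "\<dots> = (\<Sum>q\<in>inj_maps m N. \<Sum>a\<in>E. \<bar>T q a X - T q a Y\<bar>) / P"
  proof -
    have "(\<Sum>e\<in>pairs N. \<Sum>a\<in>{a \<in> E. q ` a = e}. \<bar>T q a X - T q a Y\<bar>) = (\<Sum>a\<in>E. \<bar>T q a X - T q a Y\<bar>)"
      if "q \<in> inj_maps m N" for q
      by (rule sum.group[OF \<open>finite E\<close> finite_pairs]) (use image_in_pairs[OF that] E in auto)
    then show ?thesis
      by (subst sum.swap) simp
  qed
  also have "\<dots> \<le> (\<Sum>q\<in>inj_maps m N. \<Sum>a\<in>E. \<Sum>b\<in>E - {a}. \<bar>X (q ` b) - Y (q ` b)\<bar>) / P"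
  proof (intro divide_right_mono sum_mono \<open>0 \<le> P\<close>)
    fix q a assume "q \<in> inj_maps m N"
    then have "\<And>b. b \<in> E \<Longrightarrow> q ` b \<in> pairs N"
      using image_in_pairs E by blast
    then show "\<bar>T q a X - T q a Y\<bar> \<le> (\<Sum>b\<in>E - {a}. \<bar>X (q ` b) - Y (q ` b)\<bar>)"
      unfolding T_def using X01 Y01 by (intro norm_prod_diff[where 'a = real, simplified]) auto
  qed
  also have "\<dots> = (\<Sum>a\<in>E. \<Sum>b\<in>E - {a}. \<Sum>q\<in>inj_maps m N. \<bar>X (q ` b) - Y (q ` b)\<bar>) / P"
    by (subst sum.swap) (simp add: sum.swap[where A = "inj_maps m N"])
  finally show ?thesis
    unfolding P_def .
qed

lemma of_nat_mult_pred_nonneg: "0 \<le> real n * (real n - 1)"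
  by (cases n) simp_all

lemma l1norm_nonneg: "0 \<le> l1norm N v"
  unfolding l1norm_def by (rule sum_nonneg) simp

lemma sum_sum_Diff_singleton_const:
  assumes "finite E"
  shows "(\<Sum>a\<in>E. \<Sum>b\<in>E - {a}. c) = real (card E) * (real (card E) - 1) * c"
proof -
  have "(\<Sum>b\<in>E - {a}. c) = (real (card E) - 1) * c" if "a \<in> E" for a
  proof -
    have "card E \<ge> 1"
      using that assms by (simp add: Suc_le_eq card_gt_0_iff) blast
    then show ?thesis
      using that assms by (simp add: of_nat_diff)
  qed
  then have "(\<Sum>a\<in>E. \<Sum>b\<in>E - {a}. c) = (\<Sum>a\<in>E. (real (card E) - 1) * c)"
    by (rule sum.cong[OF refl])
  then show ?thesis
    by simp
qed

lemma dpartial_hom_density_l1_lipschitz: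
  fixes X Y :: "nat set \<Rightarrow> real"
  assumes E: "E \<subseteq> pairs m"
    and X01: "\<forall>e\<in>pairs N. 0 \<le> X e \<and> X e \<le> 1"
    and Y01: "\<forall>e\<in>pairs N. 0 \<le> Y e \<and> Y e \<le> 1"
  shows "real N * (real N - 1) * l1norm N (\<lambda>e. dpartial (hom_density m E N) e X - dpartial (hom_density m E N) e Y)
       \<le> real (card E) * (real (card E) - 1) * l1norm N (\<lambda>e. X e - Y e)"
proof -
  define P where "P = 2 * (\<Prod>k<m. real (N - k))"
  define W where "W = real N * (real N - 1)"
  define \<delta> where "\<delta> = l1norm N (\<lambda>e. X e - Y e)"
  have "0 \<le> P" "0 \<le> W" "0 \<le> \<delta>"
    by (simp_all add: P_def prod_nonneg W_def of_nat_mult_pred_nonneg \<delta>_def l1norm_nonneg)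
  have "finite E"
    using E finite_pairs by (rule finite_subset)
  have "W * l1norm N (\<lambda>e. dpartial (hom_density m E N) e X - dpartial (hom_density m E N) e Y)
      \<le> W * ((\<Sum>a\<in>E. \<Sum>b\<in>E - {a}. \<Sum>q\<in>inj_maps m N. \<bar>X (q ` b) - Y (q ` b)\<bar>) / P)"
    unfolding P_def using l1norm_dpartial_hom_density_diff_le[OF assms] \<open>0 \<le> W\<close> by (rule mult_left_mono)
  also have "\<dots> = (\<Sum>a\<in>E. \<Sum>b\<in>E - {a}. W * (\<Sum>q\<in>inj_maps m N. \<bar>X (q ` b) - Y (q ` b)\<bar>) / P)"
    by (simp add: sum_distrib_left sum_divide_distrib)
  also have "\<dots> = (\<Sum>a\<in>E. \<Sum>b\<in>E - {a}. P * \<delta> / P)"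
    using E sum_inj_maps_pair_image[where h = "\<lambda>e. \<bar>X e - Y e\<bar>"]
    by (intro sum.cong refl) (auto simp: W_def P_def \<delta>_def l1norm_def)
  also have "\<dots> \<le> (\<Sum>a\<in>E. \<Sum>b\<in>E - {a}. \<delta>)"
    using \<open>0 \<le> P\<close> \<open>0 \<le> \<delta>\<close> by (intro sum_mono) (cases "P = 0"; simp)
  also have "\<dots> = real (card E) * (real (card E) - 1) * \<delta>"
    using \<open>finite E\<close> by (rule sum_sum_Diff_singleton_const)
  finally show ?thesis
    unfolding W_def \<delta>_def .
qed

lemma dpartial_scaled_sum:
  "dpartial (\<lambda>Z. c * (\<Sum>i\<in>I. \<beta> i * g i Z)) e Z = c * (\<Sum>i\<in>I. \<beta> i * dpartial (g i) e Z)"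
proof -
  have sum_eq: "(\<Sum>i\<in>I. \<beta> i * ((g i (Z(e := 1)) - g i (Z(e := 0))) / 2))
      = ((\<Sum>i\<in>I. \<beta> i * g i (Z(e := 1))) - (\<Sum>i\<in>I. \<beta> i * g i (Z(e := 0)))) / 2"
    by (simp add: sum_divide_distrib sum_subtractf right_diff_distrib diff_divide_distrib)
  show ?thesis
    unfolding dpartial_def sum_eq by (simp add: right_diff_distrib)
qed

lemma l1norm_sum_le: "l1norm N (\<lambda>e. \<Sum>i\<in>I. u i e) \<le> (\<Sum>i\<in>I. l1norm N (u i))"
  unfolding l1norm_def by (subst sum.swap) (intro sum_mono sum_abs)

lemma l1norm_scale: "l1norm N (\<lambda>e. c * u e) = \<bar>c\<bar> * l1norm N u"
  by (simp add: l1norm_def abs_mult sum_distrib_left)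

theorem lemma31:
  fixes N L :: nat
    and v :: "nat \<Rightarrow> nat" and E :: "nat \<Rightarrow> nat set set" and \<beta> :: "nat \<Rightarrow> real"
    and f :: "(nat set \<Rightarrow> real) \<Rightarrow> real"
    and X Y :: "nat set \<Rightarrow> real"
  assumes graphs: "\<And>i. i < L \<Longrightarrow> E i \<subseteq> pairs (v i)"
    and hf: "\<And>Z. f Z = real N * (real N - 1) * (\<Sum>i<L. \<beta> i * hom_density (v i) (E i) N Z)"
    and X01: "\<forall>e\<in>pairs N. 0 \<le> X e \<and> X e \<le> 1"
    and Y01: "\<forall>e\<in>pairs N. 0 \<le> Y e \<and> Y e \<le> 1"
  shows "l1norm N (\<lambda>e. dpartial f e X - dpartial f e Y)
    \<le> (\<Sum>i<L. \<bar>\<beta> i\<bar> * real (card (E i)) * (real (card (E i)) - 1)) * l1norm N (\<lambda>e. X e - Y e)"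
proof -
  define W where "W = real N * (real N - 1)"
  define \<Delta> where "\<Delta> = (\<lambda>i e. dpartial (hom_density (v i) (E i) N) e X - dpartial (hom_density (v i) (E i) N) e Y)"
  have "0 \<le> W"
    unfolding W_def by (rule of_nat_mult_pred_nonneg)
  have f: "f = (\<lambda>Z. W * (\<Sum>i<L. \<beta> i * hom_density (v i) (E i) N Z))"
    unfolding W_def using hf by (rule ext)
  have "l1norm N (\<lambda>e. dpartial f e X - dpartial f e Y) = l1norm N (\<lambda>e. \<Sum>i<L. \<beta> i * (W * \<Delta> i e))"
    unfolding f dpartial_scaled_sum \<Delta>_def
    by (simp add: sum_distrib_left algebra_simps flip: sum_subtractf)
  also have "\<dots> \<le> (\<Sum>i<L. \<bar>\<beta> i\<bar> * (W * l1norm N (\<Delta> i)))"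
    using l1norm_sum_le[of N "\<lambda>i e. \<beta> i * (W * \<Delta> i e)" "{..<L}"]
    by (simp add: l1norm_scale \<open>0 \<le> W\<close>)
  also have "\<dots> \<le> (\<Sum>i<L. \<bar>\<beta> i\<bar> * (real (card (E i)) * (real (card (E i)) - 1) * l1norm N (\<lambda>e. X e - Y e)))"
    using dpartial_hom_density_l1_lipschitz[OF graphs X01 Y01]
    by (intro sum_mono mult_left_mono) (simp_all add: W_def \<Delta>_def)
  finally show ?thesis
    by (simp add: sum_distrib_right mult.assoc)
qed

end
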